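(* Let $T$ be a simple tree of maximum degree 3 and let $Q=Q(T,4)$ be the graph defined below. Then $Q$ covers $T^{(3)}$, and every covering projection from $Q$ to $T^{(3)}$ is 4-fold (every vertex of $T^{(3)}$ has exactly 4 preimages). Moreover, in every covering projection $f:Q\to T^{(3)}$, the image $f(u_i)$ of every relevant vertex $u_i$ of $Q$ is a semi-simple vertex of $T^{(3)}$.
   Context: A graph may contain edges, loops and semi-edges (a semi-edge is a link with exactly one end-vertex, contributing 1 to that vertex's degree). A covering projection from $G$ to $H$ is a map $f$ sending vertices to vertices and links to links such that: for every edge $e$ of $H$ with end-vertices $u,v$, $f^{-1}(e)$ is a perfect matching between $f^{-1}(u)$ and $f^{-1}(v)$; for every loop $l$ of $H$ at $u$, $f^{-1}(l)$ is a disjoint union of cycles spanning $f^{-1}(u)$; for every semi-edge $s$ of $H$ at $u$, $f^{-1}(s)$ is a disjoint union of edges and semi-edges spanning $f^{-1}(u)$. $T^{(3)}$ is the 3-regular graph obtained from $T$ by attaching $3-\deg_T(u)$ semi-edges to each vertex $u$. A vertex is semi-simple if it is incident with no loops, no multiple edges and at most one semi-edge. The graph $Q(T,4)$: take four disjoint copies of $T$, denoting by $u_i$ the copy of $u\in V_T$ in the $i$-th copy ($i\in[4]$); for every $u$ with $\deg_T u=1$ add the edges $u_1u_2,u_2u_3,u_3u_4,u_4u_1$; for every $u$ with $\deg_T u=2$ add the edges $u_1u_3$ and $u_2u_4$. A vertex $u\in V_T$ is relevant if $\deg_T u=3$, or if $\deg_T u=2$ and $u$ has a neighbor $v$ in $T$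 with $\deg_T v\ge 2$; a vertex $u_i$ of $Q$ is relevant if $u$ is relevant in $T$. *)

theory Defs
  imports Main "HOL-Library.Multiset"
begin

text \<open>A graph: a vertex set, a link set, and for every link the multiset of its
end-vertices: an edge has ends {#u,v#} with u \<noteq> v, a loop has ends {#u,u#},
a semi-edge has ends {#u#}.\<close>

record ('v, 'l) mgraph =
  verts :: "'v set"
  links :: "'l set"
  ends  :: "'l \<Rightarrow> 'v multiset"

definition wf_mgraph :: "('v, 'l) mgraph \<Rightarrow> bool" where
  "wf_mgraph G \<longleftrightarrow> finite (verts G) \<and> finite (links G) \<and>
     (\<forall>l\<in>links G. ends G l \<noteq> {#} \<and> size (ends G l) \<le> 2 \<and> set_mset (ends G l) \<subseteq> verts G)"

definition is_edge :: "('v, 'l) mgraph \<Rightarrow> 'l \<Rightarrow> bool" where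
  "is_edge G l \<longleftrightarrow> l \<in> links G \<and> (\<exists>u v. u \<noteq> v \<and> ends G l = {#u, v#})"

definition is_loop :: "('v, 'l) mgraph \<Rightarrow> 'l \<Rightarrow> bool" where
  "is_loop G l \<longleftrightarrow> l \<in> links G \<and> (\<exists>u. ends G l = {#u, u#})"

definition is_semi_edge :: "('v, 'l) mgraph \<Rightarrow> 'l \<Rightarrow> bool" where
  "is_semi_edge G l \<longleftrightarrow> l \<in> links G \<and> (\<exists>u. ends G l = {#u#})"

definition deg_in :: "('v, 'l) mgraph \<Rightarrow> 'l set \<Rightarrow> 'v \<Rightarrow> nat" where
  "deg_in G S x = (\<Sum>l\<in>S. count (ends G l) x)"

text \<open>Covering projection (fv on vertices, fl on links).
 - edge e of H with ends u,v: the preimage of e is a perfect matching between the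
   fibres of u and v (every preimage link has one end in each fibre, every vertex of
   both fibres is incident with exactly one preimage link);
 - loop at u: the preimage consists of links with both ends in the fibre of u
   (edges or loops) and is 2-regular on the fibre, i.e. a disjoint union of cycles
   spanning the fibre;
 - semi-edge at u: the preimage consists of links with all ends in the fibre of u
   and is 1-regular on the fibre, i.e. a disjoint union of edges and semi-edges
   spanning the fibre.\<close>
definition covering_projection ::
  "('v, 'l) mgraph \<Rightarrow> ('w, 'k) mgraph \<Rightarrow> ('v \<Rightarrow> 'w) \<Rightarrow> ('l \<Rightarrow> 'k) \<Rightarrow> bool" where
  "covering_projection G H fv fl \<longleftrightarrow>
     wf_mgraph G \<and> wf_mgraph H \<and>
     fv ` verts G \<subseteq> verts H \<and> fl ` links G \<subseteq> links H \<and>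
     (\<forall>e\<in>links H.
        (\<forall>u v. u \<noteq> v \<and> ends H e = {#u, v#} \<longrightarrow>
            (\<forall>l\<in>links G. fl l = e \<longrightarrow> image_mset fv (ends G l) = {#u, v#}) \<and>
            (\<forall>x\<in>verts G. fv x = u \<or> fv x = v \<longrightarrow> deg_in G {l\<in>links G. fl l = e} x = 1)) \<and>
        (\<forall>u. ends H e = {#u, u#} \<longrightarrow>
            (\<forall>l\<in>links G. fl l = e \<longrightarrow> image_mset fv (ends G l) = {#u, u#}) \<and>
            (\<forall>x\<in>verts G. fv x = u \<longrightarrow> deg_in G {l\<in>links G. fl l = e} x = 2)) \<and>
        (\<forall>u. ends H e = {#u#} \<longrightarrow>
            (\<forall>l\<in>links G. fl l = e \<longrightarrow> (\<forall>y\<in>#ends G l. fv y = u)) \<and>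
            (\<forall>x\<in>verts G. fv x = u \<longrightarrow> deg_in G {l\<in>links G. fl l = e} x = 1)))"

definition covers :: "('v, 'l) mgraph \<Rightarrow> ('w, 'k) mgraph \<Rightarrow> bool" where
  "covers G H \<longleftrightarrow> (\<exists>fv fl. covering_projection G H fv fl)"

definition semi_simple :: "('v, 'l) mgraph \<Rightarrow> 'v \<Rightarrow> bool" where
  "semi_simple H x \<longleftrightarrow>
     (\<forall>l\<in>links H. ends H l \<noteq> {#x, x#}) \<and>
     (\<forall>l1\<in>links H. \<forall>l2\<in>links H. l1 \<noteq> l2 \<and> is_edge H l1 \<and> x \<in># ends H l1
         \<longrightarrow> ends H l2 \<noteq> ends H l1) \<and>
     card {l\<in>links H. ends H l = {#x#}} \<le> 1"

definition simple_graph :: "'a set \<Rightarrow> 'a set set \<Rightarrow> bool" where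
  "simple_graph V E \<longleftrightarrow> finite V \<and> (\<forall>e\<in>E. \<exists>u v. u \<noteq> v \<and> e = {u, v} \<and> u \<in> V \<and> v \<in> V)"

definition sdeg :: "'a set set \<Rightarrow> 'a \<Rightarrow> nat" where
  "sdeg E u = card {e\<in>E. u \<in> e}"

definition connected_sg :: "'a set \<Rightarrow> 'a set set \<Rightarrow> bool" where
  "connected_sg V E \<longleftrightarrow> (\<forall>u\<in>V. \<forall>v\<in>V. (u, v) \<in> {(x, y). {x, y} \<in> E}\<^sup>*)"

definition acyclic_sg :: "'a set \<Rightarrow> 'a set set \<Rightarrow> bool" where
  "acyclic_sg V E \<longleftrightarrow> \<not> (\<exists>c. length c \<ge> 3 \<and> distinct c \<and> set c \<subseteq> V \<and>
       (\<forall>i<length c. {c ! i, c ! ((i + 1) mod length c)} \<in> E))"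

definition is_tree :: "'a set \<Rightarrow> 'a set set \<Rightarrow> bool" where
  "is_tree V E \<longleftrightarrow> simple_graph V E \<and> V \<noteq> {} \<and> connected_sg V E \<and> acyclic_sg V E"

definition T3 :: "'a set \<Rightarrow> 'a set set \<Rightarrow> ('a, 'a set + ('a \<times> nat)) mgraph" where
  "T3 V E = \<lparr> verts = V,
              links = Inl ` E \<union> Inr ` {(u, j). u \<in> V \<and> j < 3 - sdeg E u},
              ends = (\<lambda>l. case l of Inl e \<Rightarrow> mset_set e | Inr (u, j) \<Rightarrow> {#u#}) \<rparr>"

text \<open>Q(T,4): vertex u_i is the pair (u, i), i \<in> {1..4}; it is a simple graph, each
link is a 2-element set of vertices.\<close>
definition Q_links :: "'a set \<Rightarrow> 'a set set \<Rightarrow> ('a \<times> nat) set set" where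
  "Q_links V E =
     {{(u, i), (v, i)} | u v i. {u, v} \<in> E \<and> i \<in> {1..4}} \<union>
     (\<Union>u\<in>{u\<in>V. sdeg E u = 1}.
        {{(u, 1), (u, 2)}, {(u, 2), (u, 3)}, {(u, 3), (u, 4)}, {(u, 4), (u, 1)}}) \<union>
     (\<Union>u\<in>{u\<in>V. sdeg E u = 2}. {{(u, 1), (u, 3)}, {(u, 2), (u, 4)}})"

definition Q4 :: "'a set \<Rightarrow> 'a set set \<Rightarrow> ('a \<times> nat, ('a \<times> nat) set) mgraph" where
  "Q4 V E = \<lparr> verts = V \<times> {1..4}, links = Q_links V E, ends = mset_set \<rparr>"

definition relevant :: "'a set \<Rightarrow> 'a set set \<Rightarrow> 'a \<Rightarrow> bool" where
  "relevant V E u \<longleftrightarrow> u \<in> V \<and>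
     (sdeg E u = 3 \<or> (sdeg E u = 2 \<and> (\<exists>v. {u, v} \<in> E \<and> sdeg E v \<ge> 2)))"

end

theory Submission
  imports Defs
begin

(*
  The projection (u, i) |-> u is a covering Q(T,4) -> T^(3). Conversely, for any covering
  projection f, edges of T lift to perfect matchings between fibres, so by connectivity all
  fibres have |V(Q)| / |V(T)| = 4 elements.

  Colour (u, i) by the parity of i: only the links of the 4-cycles at the leaves of T change
  the colour. The image of such a 4-cycle cannot leave the fibre of a vertex through both of
  its links at that vertex, as it would close a triangle or a 4-cycle in T; so these fibres
  contain both colours, and propagating along the edges of T, every fibre does.

  Over a leaf w of T, both semi-edges at w match the fibre with itself, so, Q being
  triangle-free, the fibre induces a 4-cycle. If it contained (u, i) with deg u >= 2, the two
  fibre neighbours of (u, i) would have its colour; the fourth vertex cannot have it too, so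
  its links to them change colour, which puts both into one set {c} x {1..4}, where (u, i) has
  at most one neighbour. Hence f(u, i) has degree at least 2, and such vertices of T^(3) are
  semi-simple.
*)

section \<open>Simple graphs and trees\<close>

lemma connected_sg_induct:
  assumes "connected_sg V E" "u \<in> V" "v \<in> V" "P u"
    and step: "\<And>x y. P x \<Longrightarrow> {x, y} \<in> E \<Longrightarrow> P y"
  shows "P v"
proof -
  have "(u, v) \<in> {(x, y). {x, y} \<in> E}\<^sup>*"
    using assms(1-3) unfolding connected_sg_def by blast
  then show ?thesis
    by (induction rule: rtrancl_induct) (use assms(4) step in auto)
qed

locale sgraph =
  fixes V :: "'a set" and E :: "'a set set"
  assumes simple: "simple_graph V E"
begin

lemma finite_V: "finite V"
  using simple unfolding simple_graph_def by simp

lemma edgeE: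
  assumes "e \<in> E"
  obtains a b where "a \<noteq> b" "e = {a, b}" "a \<in> V" "b \<in> V"
  using assms simple unfolding simple_graph_def by blast

lemma edge_ends:
  assumes "{a, b} \<in> E"
  shows "a \<noteq> b" "a \<in> V" "b \<in> V"
  using edgeE[OF assms] by (metis doubleton_eq_iff)+

lemma singleton_notin_E: "{a} \<notin> E"
  using edge_ends(1)[of a a] by auto

lemma finite_E: "finite E"
proof -
  have "E \<subseteq> Pow V"
    using edgeE by blast
  then show ?thesis
    using finite_V by (meson finite_Pow_iff finite_subset)
qed

lemma sdeg_pos:
  assumes "connected_sg V E" "card V \<ge> 2" "u \<in> V"
  shows "sdeg E u \<ge> 1"
proof -
  have "V \<noteq> {u}"
    using assms(2) by auto
  then obtain v where "v \<in> V" "v \<noteq> u"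
    using assms(3) by blast
  then have "(u, v) \<in> {(x, y). {x, y} \<in> E}\<^sup>+"
    using assms(1,3) unfolding connected_sg_def by (metis rtrancl_eq_or_trancl)
  then obtain w where "{u, w} \<in> E"
    by (auto dest: tranclD)
  moreover have "finite {e \<in> E. u \<in> e}"
    using finite_E by simp
  ultimately have "card {e \<in> E. u \<in> e} \<noteq> 0"
    by auto
  then show ?thesis
    unfolding sdeg_def by simp
qed

lemma acyclic_no_triangle:
  assumes "acyclic_sg V E" "{a, b} \<in> E" "{b, c} \<in> E" "{c, a} \<in> E"
  shows False
proof -
  let ?c = "[a, b, c]"
  have "{?c ! i, ?c ! ((i + 1) mod length ?c)} \<in> E" if "i < length ?c" for i
  proof -
    have "i = 0 \<or> i = 1 \<or> i = 2"
      using that by auto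
    then show ?thesis
      using assms(2-4) by (elim disjE) simp_all
  qed
  moreover have "distinct ?c" "set ?c \<subseteq> V"
    using edge_ends[OF assms(2)] edge_ends[OF assms(3)] edge_ends[OF assms(4)] by auto
  moreover have "length ?c \<ge> 3"
    by simp
  ultimately show False
    using assms(1) unfolding acyclic_sg_def by blast
qed

lemma acyclic_no_square:
  assumes "acyclic_sg V E" "{a, b} \<in> E" "{b, c} \<in> E" "{c, d} \<in> E" "{d, a} \<in> E" "a \<noteq> c" "b \<noteq> d"
  shows False
proof -
  let ?c = "[a, b, c, d]"
  have "{?c ! i, ?c ! ((i + 1) mod length ?c)} \<in> E" if "i < length ?c" for i
  proof -
    have "i = 0 \<or> i = 1 \<or> i = 2 \<or> i = 3"
      using that by auto
    then show ?thesis
      using assms(2-5) by (elim disjE) simp_all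
  qed
  moreover have "distinct ?c" "set ?c \<subseteq> V"
    using edge_ends[OF assms(2)] edge_ends[OF assms(3)] edge_ends[OF assms(4)] edge_ends[OF assms(5)]
      assms(6,7) by auto
  moreover have "length ?c \<ge> 3"
    by simp
  ultimately show False
    using assms(1) unfolding acyclic_sg_def by blast
qed

lemma acyclic_common_neighbour:
  assumes "acyclic_sg V E" "{z, y} \<in> E" "{z, y'} \<in> E" "y \<noteq> y'"
    and "t = y \<or> {y, t} \<in> E" "t = y' \<or> {y', t} \<in> E"
  shows "t = z"
proof (rule ccontr)
  assume "t \<noteq> z"
  have yy': "{y, y'} \<notin> E"
    using acyclic_no_triangle[OF assms(1) assms(2) _ assms(3)[unfolded insert_commute[of z]]]
    by (metis insert_commute)
  then consider "t = y" | "t = y'" | "{y, t} \<in> E" "{y', t} \<in> E" "t \<noteq> y" "t \<noteq> y'"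
    using assms(4-6) by blast
  then show False
  proof cases
    case 1
    then show False
      using assms(4,6) yy' by (auto simp: insert_commute)
  next
    case 2
    then show False
      using assms(4,5) yy' by (auto simp: insert_commute)
  next
    case 3
    then show False
      using acyclic_no_square[OF assms(1,2), of t y'] assms(3,4) \<open>t \<noteq> z\<close> by (simp add: insert_commute)
  qed
qed

end

section \<open>The graph T^(3)\<close>

lemma mset_doubleton_eq_iff: "{#a, b#} = {#c, d#} \<longleftrightarrow> {a, b} = {c, d}"
proof
  assume "{#a, b#} = {#c, d#}"
  then show "{a, b} = {c, d}"
    by (metis set_mset_add_mset_insert set_mset_empty)
next
  assume "{a, b} = {c, d}"
  then show "{#a, b#} = {#c, d#}"
    by (auto simp: doubleton_eq_iff add_mset_commute)
qed

lemma T3_simps [simp]: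
  "verts (T3 V E) = V"
  "links (T3 V E) = Inl ` E \<union> Inr ` {(u, j). u \<in> V \<and> j < 3 - sdeg E u}"
  "ends (T3 V E) (Inl e) = mset_set e"
  "ends (T3 V E) (Inr (u, j)) = {#u#}"
  by (simp_all add: T3_def)

context sgraph
begin

lemma T3_linkE:
  assumes "e \<in> links (T3 V E)"
  obtains (edge) a b where "a \<noteq> b" "{a, b} \<in> E" "e = Inl {a, b}" "ends (T3 V E) e = {#a, b#}"
    | (semi_edge) u j where "u \<in> V" "j < 3 - sdeg E u" "e = Inr (u, j)" "ends (T3 V E) e = {#u#}"
proof -
  consider (inl) x where "x \<in> E" "e = Inl x"
    | (inr) u j where "u \<in> V" "j < 3 - sdeg E u" "e = Inr (u, j)"
    using assms by auto
  then show thesis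
  proof cases
    case inl
    then obtain a b where "a \<noteq> b" "x = {a, b}"
      by (elim edgeE)
    then show thesis
      using inl edge by simp
  next
    case inr
    then show thesis
      using semi_edge by simp
  qed
qed

lemma wf_T3: "wf_mgraph (T3 V E)"
proof -
  have "{(u, j). u \<in> V \<and> j < 3 - sdeg E u} \<subseteq> V \<times> {..<3}"
    by auto
  then have "finite (links (T3 V E))"
    using finite_V finite_E by (simp add: finite_subset)
  moreover have "ends (T3 V E) e \<noteq> {#} \<and> size (ends (T3 V E) e) \<le> 2 \<and> set_mset (ends (T3 V E) e) \<subseteq> V"
    if "e \<in> links (T3 V E)" for e
    using that by (cases rule: T3_linkE) (auto dest: edge_ends)
  ultimately show ?thesis
    using finite_V unfolding wf_mgraph_def by simp
qed

lemma semi_simple_T3: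
  assumes "sdeg E w \<ge> 2"
  shows "semi_simple (T3 V E) w"
proof -
  have no_loop: "ends (T3 V E) l \<noteq> {#w, w#}" if "l \<in> links (T3 V E)" for l
    using that by (cases rule: T3_linkE) (auto simp: mset_doubleton_eq_iff doubleton_eq_iff)
  have no_parallel: "ends (T3 V E) l' \<noteq> ends (T3 V E) l"
    if links: "l \<in> links (T3 V E)" "l' \<in> links (T3 V E)" "l \<noteq> l'" "is_edge (T3 V E) l" for l l'
  proof -
    obtain a b where l: "l = Inl {a, b}" "ends (T3 V E) l = {#a, b#}"
      using links(1,4) by (cases rule: T3_linkE) (auto simp: is_edge_def)
    from links(2) show ?thesis
    proof (cases rule: T3_linkE)
      case (edge c d)
      then show ?thesis
        using l links(3) by (metis mset_doubleton_eq_iff)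
    next
      case semi_edge
      then show ?thesis
        using l by simp
    qed
  qed
  have "{l \<in> links (T3 V E). ends (T3 V E) l = {#w#}} \<subseteq> {Inr (w, 0)}"
  proof
    fix l
    assume l: "l \<in> {l \<in> links (T3 V E). ends (T3 V E) l = {#w#}}"
    then have "l \<in> links (T3 V E)"
      by simp
    then show "l \<in> {Inr (w, 0)}"
      using l assms by (cases rule: T3_linkE) auto
  qed
  then have "card {l \<in> links (T3 V E). ends (T3 V E) l = {#w#}} \<le> 1"
    using card_mono[OF finite.insertI[OF finite.emptyI]] by fastforce
  with no_loop no_parallel show ?thesis
    unfolding semi_simple_def by simp
qed

end

section \<open>Covers of T^(3) by simple graphs\<close>

locale simple_mgraph =
  fixes G :: "('v, 'v set) mgraph"
  assumes ends_eq: "ends G = mset_set"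
    and link_doubleton: "l \<in> links G \<Longrightarrow> \<exists>x y. x \<noteq> y \<and> l = {x, y}"
begin

lemma link_neq: "{x, y} \<in> links G \<Longrightarrow> x \<noteq> y"
  using link_doubleton by (metis doubleton_eq_iff)

lemma ends_link: "{x, y} \<in> links G \<Longrightarrow> ends G {x, y} = {#x, y#}"
  using link_neq by (simp add: ends_eq)

lemma deg_in_eq_card:
  assumes "finite S" "S \<subseteq> links G"
  shows "deg_in G S x = card {y. {x, y} \<in> S}"
proof -
  have "count (mset_set l) x = (if x \<in> l then 1 else 0)" if l: "l \<in> S" for l
  proof -
    obtain a b where "l = {a, b}"
      using l assms(2) link_doubleton by blast
    then show ?thesis
      by simp
  qed
  then have "deg_in G S x = (\<Sum>l\<in>S. if x \<in> l then 1 else 0)"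
    unfolding deg_in_def ends_eq by (rule sum.cong[OF refl])
  also have "\<dots> = card {l \<in> S. x \<in> l}"
    using assms(1) by (simp add: sum.If_cases Int_def)
  also have "\<dots> = card {y. {x, y} \<in> S}"
  proof (rule bij_betw_same_card[symmetric])
    have "l \<in> (\<lambda>y. {x, y}) ` {y. {x, y} \<in> S}" if l: "l \<in> S" "x \<in> l" for l
    proof -
      obtain a b where "l = {a, b}"
        using l(1) assms(2) link_doubleton by blast
      with l show ?thesis
        by (auto simp: insert_commute)
    qed
    then have "{l \<in> S. x \<in> l} = (\<lambda>y. {x, y}) ` {y. {x, y} \<in> S}"
      by auto
    then show "bij_betw (\<lambda>y. {x, y}) {y. {x, y} \<in> S} {l \<in> S. x \<in> l}"
      by (auto simp: bij_betw_def inj_on_def doubleton_eq_iff)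
  qed
  finally show ?thesis .
qed

end

locale T3_cover = sgraph V E + simple_mgraph G
  for V :: "'a set" and E :: "'a set set" and G :: "('v, 'v set) mgraph" +
  fixes fv :: "'v \<Rightarrow> 'a" and fl :: "'v set \<Rightarrow> 'a set + 'a \<times> nat"
  assumes cover: "covering_projection G (T3 V E) fv fl"
begin

lemma wf_G: "wf_mgraph G"
  using cover unfolding covering_projection_def by simp

lemma fv_in_V: "x \<in> verts G \<Longrightarrow> fv x \<in> V"
  using cover unfolding covering_projection_def by auto

lemma fl_in_links: "l \<in> links G \<Longrightarrow> fl l \<in> links (T3 V E)"
  using cover unfolding covering_projection_def by auto

lemma link_in_verts: "{x, y} \<in> links G \<Longrightarrow> x \<in> verts G \<and> y \<in> verts G"
  using wf_G ends_link unfolding wf_mgraph_def by fastforce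

lemma edge_clause:
  assumes "e \<in> links (T3 V E)" "ends (T3 V E) e = {#u, v#}" "u \<noteq> v"
  shows "\<forall>l\<in>links G. fl l = e \<longrightarrow> image_mset fv (ends G l) = {#u, v#}"
    and "\<forall>x\<in>verts G. fv x = u \<or> fv x = v \<longrightarrow> deg_in G {l \<in> links G. fl l = e} x = 1"
  using cover assms unfolding covering_projection_def by meson+

lemma semi_edge_clause:
  assumes "e \<in> links (T3 V E)" "ends (T3 V E) e = {#u#}"
  shows "\<forall>l\<in>links G. fl l = e \<longrightarrow> (\<forall>y\<in>#ends G l. fv y = u)"
    and "\<forall>x\<in>verts G. fv x = u \<longrightarrow> deg_in G {l \<in> links G. fl l = e} x = 1"
  using cover assms unfolding covering_projection_def by meson+

lemma link_image_ends:
  assumes "{x, y} \<in> links G"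
  shows "set_mset (ends (T3 V E) (fl {x, y})) = {fv x, fv y}"
  using fl_in_links[OF assms]
proof (cases rule: T3_linkE)
  case (edge a b)
  then have "image_mset fv {#x, y#} = {#a, b#}"
    using edge_clause(1)[OF fl_in_links[OF assms]] assms ends_link by metis
  then show ?thesis
    using edge by (metis image_mset_add_mset image_mset_single set_mset_add_mset_insert set_mset_empty)
next
  case (semi_edge u j)
  then have "fv x = u" "fv y = u"
    using semi_edge_clause(1)[OF fl_in_links[OF assms]] assms ends_link by fastforce+
  then show ?thesis
    using semi_edge by simp
qed

lemma card_lifts:
  assumes "x \<in> verts G" "e \<in> links (T3 V E)" "fv x \<in># ends (T3 V E) e"
  shows "card {y. {x, y} \<in> links G \<and> fl {x, y} = e} = 1"
proof -
  have "deg_in G {l \<in> links G. fl l = e} x = 1"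
    using assms(2)
  proof (cases rule: T3_linkE)
    case (edge a b)
    then show ?thesis
      using edge_clause(2)[OF assms(2) edge(4,1)] assms(1,3) by auto
  next
    case (semi_edge u j)
    then show ?thesis
      using semi_edge_clause(2)[OF assms(2) semi_edge(4)] assms(1,3) by auto
  qed
  moreover have "finite (links G)"
    using wf_G unfolding wf_mgraph_def by simp
  ultimately show ?thesis
    using deg_in_eq_card[of "{l \<in> links G. fl l = e}" x] by simp
qed

lemma adjacent_fibres:
  assumes "{x, y} \<in> links G" "fv x \<noteq> fv y"
  shows "{fv x, fv y} \<in> E" "fl {x, y} = Inl {fv x, fv y}"
proof -
  have ends: "set_mset (ends (T3 V E) (fl {x, y})) = {fv x, fv y}"
    by (rule link_image_ends[OF assms(1)])
  from fl_in_links[OF assms(1)] have "{fv x, fv y} \<in> E \<and> fl {x, y} = Inl {fv x, fv y}"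
  proof (cases rule: T3_linkE)
    case (edge a b)
    then show ?thesis
      using ends by simp
  next
    case (semi_edge u j)
    then show ?thesis
      using ends assms(2) by (simp add: doubleton_eq_iff)
  qed
  then show "{fv x, fv y} \<in> E" "fl {x, y} = Inl {fv x, fv y}"
    by simp_all
qed

lemma unique_lift:
  assumes "x \<in> verts G" "e \<in> links (T3 V E)" "fv x \<in># ends (T3 V E) e"
  shows "\<exists>!y. {x, y} \<in> links G \<and> fl {x, y} = e"
proof -
  obtain y where "{y. {x, y} \<in> links G \<and> fl {x, y} = e} = {y}"
    using card_lifts[OF assms] by (rule card_1_singletonE)
  then show ?thesis
    by (metis (mono_tags, lifting) mem_Collect_eq singletonD singletonI)
qed

lemma lift_edge:
  assumes "x \<in> verts G" "{fv x, z} \<in> E"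
  shows "\<exists>!y. {x, y} \<in> links G \<and> fv y = z"
proof -
  let ?e = "Inl {fv x, z} :: 'a set + 'a \<times> nat"
  have neq: "fv x \<noteq> z"
    using edge_ends(1)[OF assms(2)] .
  have "?e \<in> links (T3 V E)" "fv x \<in># ends (T3 V E) ?e"
    using assms(2) by simp_all
  then obtain y where y: "{x, y} \<in> links G" "fl {x, y} = ?e"
    and uniq: "\<And>y'. {x, y'} \<in> links G \<Longrightarrow> fl {x, y'} = ?e \<Longrightarrow> y' = y"
    using unique_lift[OF assms(1)] by metis
  have "{fv x, fv y} = {fv x, z}"
    using link_image_ends[OF y(1)] y(2) by simp
  then have "fv y = z"
    using neq by (metis doubleton_eq_iff)
  moreover have "y' = y" if "{x, y'} \<in> links G" "fv y' = z" for y'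
    using uniq adjacent_fibres(2) that neq by metis
  ultimately show ?thesis
    using y(1) by blast
qed

lemma fibre_neighbours:
  assumes "x \<in> verts G" "sdeg E (fv x) \<le> 1"
  shows "\<exists>y1 y2. y1 \<noteq> y2 \<and> {x, y1} \<in> links G \<and> {x, y2} \<in> links G \<and> fv y1 = fv x \<and> fv y2 = fv x"
proof -
  have lift: "\<exists>y. {x, y} \<in> links G \<and> fl {x, y} = Inr (fv x, k) \<and> fv y = fv x" if "k < 2" for k
  proof -
    have "(fv x, k) \<in> {(u, j). u \<in> V \<and> j < 3 - sdeg E u}"
      using that assms(2) fv_in_V[OF assms(1)] by simp
    then have "Inr (fv x, k) \<in> links (T3 V E)" "fv x \<in># ends (T3 V E) (Inr (fv x, k))"
      by simp_all
    from unique_lift[OF assms(1) this] obtain y where y: "{x, y} \<in> links G" "fl {x, y} = Inr (fv x, k)"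
      by blast
    then have "{fv x, fv y} = {fv x}"
      using link_image_ends[OF y(1)] by simp
    then show ?thesis
      using y by blast
  qed
  obtain y1 y2 where y1: "{x, y1} \<in> links G" "fl {x, y1} = Inr (fv x, 0)" "fv y1 = fv x"
    and y2: "{x, y2} \<in> links G" "fl {x, y2} = Inr (fv x, 1)" "fv y2 = fv x"
    using lift[of 0] lift[of 1] by auto
  have "y1 \<noteq> y2"
  proof
    assume "y1 = y2"
    then have "Inr (fv x, 0) = (Inr (fv x, 1) :: 'a set + 'a \<times> nat)"
      using y1(2) y2(2) by simp
    then show False
      by simp
  qed
  then show ?thesis
    using y1 y2 by blast
qed

lemma square_meets_fibre:
  assumes "acyclic_sg V E" "{x, y} \<in> links G" "{x, y'} \<in> links G" "{y, t} \<in> links G" "{y', t} \<in> links G"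
    and "y \<noteq> y'" "x \<noteq> t"
  shows "fv y = fv x \<or> fv y' = fv x"
proof (rule ccontr)
  assume "\<not> ?thesis"
  then have zy: "{fv x, fv y} \<in> E" and zy': "{fv x, fv y'} \<in> E"
    using adjacent_fibres(1) assms(2,3) by metis+
  have x: "x \<in> verts G" and y: "y \<in> verts G"
    using link_in_verts assms(2) by blast+
  have "fv y \<noteq> fv y'"
    using lift_edge[OF x zy] assms(2,3,6) by metis
  moreover have "fv t = fv y \<or> {fv y, fv t} \<in> E" "fv t = fv y' \<or> {fv y', fv t} \<in> E"
    using adjacent_fibres(1)[OF assms(4)] adjacent_fibres(1)[OF assms(5)] by metis+
  ultimately have "fv t = fv x"
    using acyclic_common_neighbour[OF assms(1) zy zy'] by blast
  moreover have "{fv y, fv x} \<in> E" "{y, x} \<in> links G"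
    using zy assms(2) by (simp_all add: insert_commute)
  ultimately show False
    using lift_edge[OF y] assms(4,7) by metis
qed

definition fibre :: "'a \<Rightarrow> 'v set" where
  "fibre u = {x \<in> verts G. fv x = u}"

lemma finite_fibre: "finite (fibre u)"
  using wf_G unfolding fibre_def wf_mgraph_def by simp

lemma fibre_over_leaf_neighbour:
  assumes "fibre w = {x, y, y', t}" "sdeg E w \<le> 1" "{y, y'} \<notin> links G"
  shows "{y, t} \<in> links G"
proof -
  have y: "y \<in> verts G" "fv y = w"
    using assms(1) unfolding fibre_def by auto
  then obtain n1 n2 where n: "n1 \<noteq> n2" "{y, n1} \<in> links G" "{y, n2} \<in> links G" "fv n1 = w" "fv n2 = w"
    using fibre_neighbours assms(2) by metis
  then have "n1 \<in> fibre w" "n2 \<in> fibre w" "n1 \<noteq> y" "n2 \<noteq> y"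
    using link_in_verts link_neq unfolding fibre_def by auto
  then have "n1 \<in> {x, t}" "n2 \<in> {x, t}"
    using assms(1,3) n(2,3) by auto
  then show ?thesis
    using n(1-3) by auto
qed

lemma card_fibre_le:
  assumes "{u, v} \<in> E"
  shows "card (fibre u) \<le> card (fibre v)"
proof -
  define g where "g x = (THE y. {x, y} \<in> links G \<and> fv y = v)" for x
  have g: "{x, g x} \<in> links G \<and> fv (g x) = v" if "x \<in> fibre u" for x
  proof -
    have "x \<in> verts G" "{fv x, v} \<in> E"
      using that assms unfolding fibre_def by simp_all
    then show ?thesis
      unfolding g_def by (rule theI'[OF lift_edge])
  qed
  have "inj_on g (fibre u)"
  proof (rule inj_onI)
    fix x1 x2
    assume x: "x1 \<in> fibre u" "x2 \<in> fibre u" "g x1 = g x2"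
    have "g x1 \<in> verts G" "{fv (g x1), u} \<in> E"
      using g[OF x(1)] assms link_in_verts by (auto simp: insert_commute)
    then have "\<exists>!y. {g x1, y} \<in> links G \<and> fv y = u"
      by (rule lift_edge)
    moreover have "{g x1, x1} \<in> links G" "{g x1, x2} \<in> links G"
      using g[OF x(1)] g[OF x(2)] x(3) by (simp_all add: insert_commute)
    ultimately show "x1 = x2"
      using x(1,2) unfolding fibre_def by blast
  qed
  moreover have "g ` fibre u \<subseteq> fibre v"
    using g link_in_verts unfolding fibre_def by blast
  ultimately show ?thesis
    using card_inj_on_le finite_fibre by blast
qed

lemma card_fibre_edge:
  assumes "{u, v} \<in> E"
  shows "card (fibre u) = card (fibre v)"
  using card_fibre_le[OF assms] card_fibre_le[of v u] assms by (simp add: insert_commute)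

lemma card_verts_eq:
  assumes "connected_sg V E" "u \<in> V"
  shows "card (verts G) = card V * card (fibre u)"
proof -
  have "card (fibre v) = card (fibre u)" if "v \<in> V" for v
    using connected_sg_induct[OF assms(1,2) that, of "\<lambda>v. card (fibre v) = card (fibre u)"]
      card_fibre_edge by metis
  moreover have "verts G = (\<Union>v\<in>V. fibre v)"
    using fv_in_V unfolding fibre_def by auto
  moreover have "card (\<Union>v\<in>V. fibre v) = (\<Sum>v\<in>V. card (fibre v))"
    using finite_V finite_fibre by (intro card_UN_disjoint) (auto simp: fibre_def)
  ultimately show ?thesis
    by simp
qed

end

lemma (in sgraph) covering_projection_T3I:
  assumes "simple_mgraph G" "wf_mgraph G"
    and maps: "fv ` verts G \<subseteq> V" "fl ` links G \<subseteq> links (T3 V E)"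
    and link_ends: "\<And>x y. {x, y} \<in> links G \<Longrightarrow> set_mset (ends (T3 V E) (fl {x, y})) = {fv x, fv y}"
    and lifts: "\<And>x e. x \<in> verts G \<Longrightarrow> e \<in> links (T3 V E) \<Longrightarrow> fv x \<in># ends (T3 V E) e \<Longrightarrow>
      card {y. {x, y} \<in> links G \<and> fl {x, y} = e} = 1"
  shows "covering_projection G (T3 V E) fv fl"
proof -
  interpret G: simple_mgraph G
    by fact
  have deg: "deg_in G {l \<in> links G. fl l = e} x = 1"
    if "x \<in> verts G" "e \<in> links (T3 V E)" "fv x \<in># ends (T3 V E) e" for x e
    using lifts[OF that] G.deg_in_eq_card[of "{l \<in> links G. fl l = e}" x] assms(2)
    unfolding wf_mgraph_def by simp
  have edge_ends: "image_mset fv (ends G l) = {#u, v#}"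
    if l: "l \<in> links G" "ends (T3 V E) (fl l) = {#u, v#}" for l u v
  proof -
    obtain x y where "l = {x, y}"
      using G.link_doubleton[OF l(1)] by blast
    then show ?thesis
      using link_ends[of x y] l G.ends_link by (simp add: mset_doubleton_eq_iff)
  qed
  have semi_edge_ends: "fv y = u"
    if l: "l \<in> links G" "ends (T3 V E) (fl l) = {#u#}" "y \<in># ends G l" for l u y
  proof -
    obtain x x' where "l = {x, x'}"
      using G.link_doubleton[OF l(1)] by blast
    then show ?thesis
      using link_ends[of x x'] l G.ends_link by auto
  qed
  have no_loop: "ends (T3 V E) e \<noteq> {#u, u#}" if "e \<in> links (T3 V E)" for e u
    using that by (cases rule: T3_linkE) (auto simp: mset_doubleton_eq_iff)
  show ?thesis
    unfolding covering_projection_def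
    using assms(2) wf_T3 maps deg edge_ends semi_edge_ends no_loop by auto
qed

section \<open>The graph Q(T,4)\<close>

lemma in_1_4_iff: "(i :: nat) \<in> {1..4} \<longleftrightarrow> i = 1 \<or> i = 2 \<or> i = 3 \<or> i = 4"
  by auto

lemma doubleton_in_tree_copies_iff:
  "{(a, i), (b, j)} \<in> {{(u, k), (v, k)} | u v k. {u, v} \<in> E \<and> k \<in> K} \<longleftrightarrow>
     i = j \<and> i \<in> K \<and> {a, b} \<in> E"
  by (auto simp: doubleton_eq_iff insert_commute)

lemma doubleton_in_leaf_cycle_iff:
  "{(a, i), (b, j :: nat)} \<in> {{(u, 1), (u, 2)}, {(u, 2), (u, 3)}, {(u, 3), (u, 4)}, {(u, 4), (u, 1)}} \<longleftrightarrow>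
     a = u \<and> b = u \<and> i \<in> {1..4} \<and> j \<in> {1..4} \<and> odd (i + j)"
  unfolding in_1_4_iff by (auto simp: doubleton_eq_iff)

lemma doubleton_in_diagonals_iff:
  "{(a, i), (b, j :: nat)} \<in> {{(u, 1), (u, 3)}, {(u, 2), (u, 4)}} \<longleftrightarrow>
     a = u \<and> b = u \<and> i \<in> {1..4} \<and> j \<in> {1..4} \<and> i \<noteq> j \<and> even (i + j)"
  unfolding in_1_4_iff by (auto simp: doubleton_eq_iff)

lemma Q_adjacent_iff:
  "{(a, i), (b, j)} \<in> Q_links V E \<longleftrightarrow> i \<in> {1..4} \<and> j \<in> {1..4} \<and>
     ((i = j \<and> {a, b} \<in> E) \<or>
      (a = b \<and> a \<in> V \<and> (sdeg E a = 1 \<and> odd (i + j) \<or> sdeg E a = 2 \<and> i \<noteq> j \<and> even (i + j))))"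
  unfolding Q_links_def Un_iff UN_iff doubleton_in_tree_copies_iff doubleton_in_leaf_cycle_iff
    doubleton_in_diagonals_iff by auto

lemma Q_linkE:
  assumes "l \<in> Q_links V E"
  obtains a i b j where "l = {(a, i), (b, j)}"
  using assms unfolding Q_links_def by blast

lemma Q4_simps [simp]:
  "verts (Q4 V E) = V \<times> {1..4}"
  "links (Q4 V E) = Q_links V E"
  "ends (Q4 V E) = mset_set"
  by (simp_all add: Q4_def)

text \<open>The 4-cycle at a leaf u is split into the perfect matchings {12, 34} and {23, 41} of the
  copies of u, lying over the semi-edges 0 and 1 at u; the matching {13, 24} at a vertex of
  degree 2 lies over its only semi-edge.\<close>

definition Q_proj_link :: "('a \<times> nat) set \<Rightarrow> 'a set + 'a \<times> nat" where
  "Q_proj_link l = (if card (fst ` l) = 2 then Inl (fst ` l)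
     else Inr (the_elem (fst ` l), if snd ` l \<in> {{2, 3}, {1, 4}} then 1 else 0))"

lemma Q_proj_link_edge: "a \<noteq> b \<Longrightarrow> Q_proj_link {(a, i), (b, j)} = Inl {a, b}"
  unfolding Q_proj_link_def by simp

lemma Q_proj_link_local:
  "Q_proj_link {(a, i), (a, j)} = Inr (a, if {i, j} \<in> {{2, 3}, {1, 4}} then 1 else 0)"
  unfolding Q_proj_link_def by simp

lemma local_partner_index_unique:
  assumes "(i :: nat) \<in> {1..4}" "s = 1 \<or> s = 2" "(j :: nat) < 3 - s"
  shows "\<exists>!k. k \<in> {1..4} \<and> (s = 1 \<and> odd (i + k) \<or> s = 2 \<and> i \<noteq> k \<and> even (i + k)) \<and>
    (if {i, k} \<in> {{2, 3}, {1, 4}} then 1 else 0) = j"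
    (is "\<exists>!k. k \<in> {1..4} \<and> ?P k")
proof -
  have "{1..4} = {1, 2, 3, 4 :: nat}"
    by auto
  moreover have "j = 0 \<or> s = 1 \<and> j = 1"
    using assms(2,3) by auto
  then have "(\<exists>k\<in>{1, 2, 3, 4}. ?P k) \<and> (\<forall>k\<in>{1, 2, 3, 4}. \<forall>k'\<in>{1, 2, 3, 4}. ?P k \<longrightarrow> ?P k' \<longrightarrow> k = k')"
    using assms(1,2) unfolding in_1_4_iff by (elim disjE; simp add: doubleton_eq_iff)
  ultimately show ?thesis
    by blast
qed

context sgraph
begin

lemma Q_adjacent_verts: "{x, y} \<in> Q_links V E \<Longrightarrow> x \<in> V \<times> {1..4} \<and> y \<in> V \<times> {1..4}"
  by (cases x; cases y) (auto simp: Q_adjacent_iff dest: edge_ends)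

lemma Q_adjacent_neq:
  assumes "{x, y} \<in> Q_links V E"
  shows "x \<noteq> y"
proof
  assume "x = y"
  obtain a i where "x = (a, i)"
    by force
  with assms \<open>x = y\<close> have "{(a, i), (a, i)} \<in> Q_links V E"
    by simp
  then show False
    unfolding Q_adjacent_iff using singleton_notin_E by auto
qed

lemma Q_link_doubleton:
  assumes "l \<in> Q_links V E"
  obtains x y where "x \<noteq> y" "l = {x, y}" "x \<in> V \<times> {1..4}" "y \<in> V \<times> {1..4}"
proof -
  obtain a i b j where "l = {(a, i), (b, j)}"
    using assms by (rule Q_linkE)
  then show thesis
    using that assms Q_adjacent_neq Q_adjacent_verts by blast
qed

lemma simple_mgraph_Q4: "simple_mgraph (Q4 V E)"
proof
  fix l
  assume "l \<in> links (Q4 V E)"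
  then have "l \<in> Q_links V E"
    by simp
  then obtain x y where "x \<noteq> y" "l = {x, y}"
    by (rule Q_link_doubleton)
  then show "\<exists>x y. x \<noteq> y \<and> l = {x, y}"
    by blast
qed simp

lemma wf_Q4: "wf_mgraph (Q4 V E)"
proof -
  have "Q_links V E \<subseteq> Pow (V \<times> {1..4})"
    by (auto elim: Q_link_doubleton)
  then have "finite (Q_links V E)"
    using finite_V by (simp add: finite_subset)
  moreover have "ends (Q4 V E) l \<noteq> {#} \<and> size (ends (Q4 V E) l) \<le> 2 \<and> set_mset (ends (Q4 V E) l) \<subseteq> V \<times> {1..4}"
    if "l \<in> Q_links V E" for l
  proof -
    obtain x y where "x \<noteq> y" "l = {x, y}" "x \<in> V \<times> {1..4}" "y \<in> V \<times> {1..4}"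
      using \<open>l \<in> Q_links V E\<close> by (rule Q_link_doubleton)
    then show ?thesis
      by simp
  qed
  ultimately show ?thesis
    using finite_V unfolding wf_mgraph_def by simp
qed

lemma Q_local_adjacent_iff:
  "{(a, i), (a, j)} \<in> Q_links V E \<longleftrightarrow> a \<in> V \<and> i \<in> {1..4} \<and> j \<in> {1..4} \<and>
     (sdeg E a = 1 \<and> odd (i + j) \<or> sdeg E a = 2 \<and> i \<noteq> j \<and> even (i + j))"
  unfolding Q_adjacent_iff using singleton_notin_E by auto

lemma Q_proj_link_adjacent:
  assumes "{(a, i), (b, j)} \<in> Q_links V E"
  shows "Q_proj_link {(a, i), (b, j)} \<in> links (T3 V E) \<and>
    set_mset (ends (T3 V E) (Q_proj_link {(a, i), (b, j)})) = {a, b}"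
proof (cases "a = b")
  case True
  then have "sdeg E a = 1 \<or> sdeg E a = 2 \<and> odd (i + j) = False" "a \<in> V"
    using assms unfolding True Q_local_adjacent_iff by auto
  moreover have "{i, j} \<in> {{2, 3}, {1, 4}} \<Longrightarrow> odd (i + j)"
    by (auto simp: doubleton_eq_iff)
  ultimately show ?thesis
    using True by (auto simp: Q_proj_link_local)
next
  case False
  then show ?thesis
    using assms unfolding Q_adjacent_iff by (simp add: Q_proj_link_edge)
qed

lemma Q_lifts_edge:
  assumes "{p, q} \<in> E" "i \<in> {1..4}"
  shows "{y. {(p, i), y} \<in> Q_links V E \<and> Q_proj_link {(p, i), y} = Inl {p, q}} = {(q, i)}"
proof -
  have pq: "p \<noteq> q"
    using edge_ends(1)[OF assms(1)] .
  have "y = (q, i)" if "{(p, i), y} \<in> Q_links V E" "Q_proj_link {(p, i), y} = Inl {p, q}" for y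
  proof -
    obtain b k where y: "y = (b, k)"
      by force
    then have "b \<noteq> p"
      using that(2) by (auto simp: Q_proj_link_local)
    moreover have "{(p, i), (b, k)} \<in> Q_links V E" "Q_proj_link {(p, i), (b, k)} = Inl {p, q}"
      using that y by simp_all
    ultimately show ?thesis
      using y pq unfolding Q_adjacent_iff by (auto simp: Q_proj_link_edge doubleton_eq_iff)
  qed
  then show ?thesis
    using assms pq by (auto simp: Q_adjacent_iff Q_proj_link_edge)
qed

lemma Q_lifts_semi_edge:
  assumes "p \<in> V" "sdeg E p \<ge> 1" "j < 3 - sdeg E p" "i \<in> {1..4}"
  shows "\<exists>k. {y. {(p, i), y} \<in> Q_links V E \<and> Q_proj_link {(p, i), y} = Inr (p, j)} = {(p, k)}"
proof -
  define P where "P k \<longleftrightarrow> k \<in> {1..4} \<and>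
    (sdeg E p = 1 \<and> odd (i + k) \<or> sdeg E p = 2 \<and> i \<noteq> k \<and> even (i + k)) \<and>
    (if {i, k} \<in> {{2, 3}, {1, 4}} then 1 else 0) = j" for k
  have "sdeg E p = 1 \<or> sdeg E p = 2"
    using assms(2,3) by auto
  then have "\<exists>!k. P k"
    unfolding P_def by (rule local_partner_index_unique[OF assms(4) _ assms(3)])
  then obtain k where k: "P k' \<longleftrightarrow> k' = k" for k'
    by blast
  have "{(p, i), (b, k')} \<in> Q_links V E \<and> Q_proj_link {(p, i), (b, k')} = Inr (p, j) \<longleftrightarrow>
    b = p \<and> P k'" for b k'
  proof (cases "b = p")
    case True
    then show ?thesis
      using assms(1,4) unfolding P_def by (simp add: Q_local_adjacent_iff Q_proj_link_local)
  next
    case False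
    then show ?thesis
      by (simp add: Q_proj_link_edge)
  qed
  then have "{y. {(p, i), y} \<in> Q_links V E \<and> Q_proj_link {(p, i), y} = Inr (p, j)} = {(p, k)}"
    using k by auto
  then show ?thesis
    by blast
qed

lemma Q_card_lifts:
  assumes "\<And>u. u \<in> V \<Longrightarrow> sdeg E u \<ge> 1"
    and "(p, i) \<in> V \<times> {1..4}" "e \<in> links (T3 V E)" "p \<in># ends (T3 V E) e"
  shows "card {y. {(p, i), y} \<in> Q_links V E \<and> Q_proj_link {(p, i), y} = e} = 1"
  using assms(3)
proof (cases rule: T3_linkE)
  case (edge a b)
  then have "{p, if p = a then b else a} \<in> E" "e = Inl {p, if p = a then b else a}"
    using assms(4) by (auto simp: insert_commute)
  then show ?thesis
    using Q_lifts_edge assms(2) by simp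
next
  case (semi_edge u j)
  then show ?thesis
    using Q_lifts_semi_edge[of p j i] assms by fastforce
qed

lemma covering_projection_Q4_T3:
  assumes "\<And>u. u \<in> V \<Longrightarrow> sdeg E u \<ge> 1"
  shows "covering_projection (Q4 V E) (T3 V E) fst Q_proj_link"
proof (rule covering_projection_T3I[OF simple_mgraph_Q4 wf_Q4])
  show "fst ` verts (Q4 V E) \<subseteq> V"
    by auto
  show "Q_proj_link ` links (Q4 V E) \<subseteq> links (T3 V E)"
  proof
    fix e
    assume "e \<in> Q_proj_link ` links (Q4 V E)"
    then obtain l where l: "l \<in> Q_links V E" "e = Q_proj_link l"
      by auto
    then obtain a i b j where "l = {(a, i), (b, j)}"
      by (auto elim: Q_linkE)
    then show "e \<in> links (T3 V E)"
      using l Q_proj_link_adjacent by blast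
  qed
  show "set_mset (ends (T3 V E) (Q_proj_link {x, y})) = {fst x, fst y}"
    if "{x, y} \<in> links (Q4 V E)" for x y
    using that Q_proj_link_adjacent by (cases x; cases y) simp
  show "card {y. {x, y} \<in> links (Q4 V E) \<and> Q_proj_link {x, y} = e} = 1"
    if "x \<in> verts (Q4 V E)" "e \<in> links (T3 V E)" "fst x \<in># ends (T3 V E) e" for x e
    using Q_card_lifts[OF assms] that by (cases x) simp
qed

end

section \<open>Covers of T^(3) by Q(T,4) for a tree T\<close>

context sgraph
begin

lemma Q_parity_change:
  assumes "{(a, i), (b, j)} \<in> Q_links V E" "odd (i + j)"
  shows "a = b" "sdeg E a = 1"
  using assms unfolding Q_adjacent_iff by auto

lemma Q_neighbours_over_same_vertex:
  assumes "{(u, i), (a, j)} \<in> Q_links V E" "{(u, i), (a, k)} \<in> Q_links V E" "sdeg E u \<noteq> 1"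
  shows "j = k"
proof (cases "a = u")
  case True
  then have "i \<in> {1..4}" "i \<noteq> j \<and> even (i + j) \<and> j \<in> {1..4}" "i \<noteq> k \<and> even (i + k) \<and> k \<in> {1..4}"
    using assms unfolding True Q_local_adjacent_iff by auto
  then show ?thesis
    unfolding in_1_4_iff by auto
next
  case False
  then show ?thesis
    using assms unfolding Q_adjacent_iff by auto
qed

lemma Q_no_local_triangle:
  assumes "{(a, i), (a, j)} \<in> Q_links V E" "{(a, j), (a, k)} \<in> Q_links V E" "{(a, i), (a, k)} \<in> Q_links V E"
  shows False
proof -
  have "i \<in> {1..4}" "j \<in> {1..4}" "k \<in> {1..4}"
    "sdeg E a = 1 \<and> odd (i + j) \<and> odd (j + k) \<and> odd (i + k) \<or>
     sdeg E a = 2 \<and> i \<noteq> j \<and> j \<noteq> k \<and> i \<noteq> k \<and> even (i + j) \<and> even (j + k)"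
    using assms unfolding Q_local_adjacent_iff by auto
  then show False
    unfolding in_1_4_iff by auto
qed

lemma Q_no_triangle_over_edge:
  assumes "{(a, i), (a, j)} \<in> Q_links V E" "{(a, j), (c, k)} \<in> Q_links V E" "{(a, i), (c, k)} \<in> Q_links V E"
    and "a \<noteq> c"
  shows False
  using assms Q_adjacent_neq[OF assms(1)] unfolding Q_adjacent_iff by auto

lemma Q_no_triangle:
  assumes "acyclic_sg V E" "{x, y} \<in> Q_links V E" "{y, z} \<in> Q_links V E" "{x, z} \<in> Q_links V E"
  shows False
proof -
  obtain a i b j c k where "x = (a, i)" "y = (b, j)" "z = (c, k)"
    by (metis prod.exhaust)
  then have xy: "{(a, i), (b, j)} \<in> Q_links V E" and yz: "{(b, j), (c, k)} \<in> Q_links V E"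
    and xz: "{(a, i), (c, k)} \<in> Q_links V E"
    using assms(2-4) by simp_all
  consider "a = b" "b = c" | "a = b" "a \<noteq> c" | "b = c" "a \<noteq> b" | "a = c" "a \<noteq> b"
    | "a \<noteq> b" "b \<noteq> c" "a \<noteq> c"
    by blast
  then show False
  proof cases
    case 1
    then show False
      using Q_no_local_triangle xy yz xz by blast
  next
    case 2
    then show False
      using Q_no_triangle_over_edge[of a i j c k] xy yz xz by blast
  next
    case 3
    then show False
      using Q_no_triangle_over_edge[of b j k a i] xy yz xz by (simp add: insert_commute)
  next
    case 4
    then show False
      using Q_no_triangle_over_edge[of a i k b j] xy yz xz by (simp add: insert_commute)
  next
    case 5
    then have "{a, b} \<in> E" "{b, c} \<in> E" "{c, a} \<in> E"
      using xy yz xz unfolding Q_adjacent_iff by (auto simp: insert_commute)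
    then show False
      by (rule acyclic_no_triangle[OF assms(1)])
  qed
qed

end

locale Q_tree_cover = sgraph V E for V :: "'a set" and E :: "'a set set" +
  fixes fv :: "'a \<times> nat \<Rightarrow> 'a" and fl :: "('a \<times> nat) set \<Rightarrow> 'a set + 'a \<times> nat"
  assumes connected: "connected_sg V E" and acyclic: "acyclic_sg V E" and two_vertices: "card V \<ge> 2"
    and Q_cover: "covering_projection (Q4 V E) (T3 V E) fv fl"

sublocale Q_tree_cover \<subseteq> T3_cover V E "Q4 V E" fv fl
  by (intro T3_cover.intro sgraph_axioms simple_mgraph_Q4 T3_cover_axioms.intro Q_cover)

context Q_tree_cover
begin

lemma card_fibre: "u \<in> V \<Longrightarrow> card (fibre u) = 4"
  using card_verts_eq[OF connected] two_vertices by (simp add: card_cartesian_product)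

lemma leaf_fibre_other_parity:
  assumes "l \<in> V" "sdeg E l = 1" "k \<in> {1..4}"
  shows "\<exists>x\<in>fibre (fv (l, k)). odd (snd x + k)"
proof -
  define k_next k_opp k_prev where "k_next = k mod 4 + 1" and "k_opp = (k + 1) mod 4 + 1"
    and "k_prev = (k + 2) mod 4 + 1"
  have idx: "odd (k + k_next)" "odd (k + k_prev)" "odd (k_next + k_opp)" "odd (k_prev + k_opp)"
    "k_next \<noteq> k_prev" "k \<noteq> k_opp" "k_next \<in> {1..4}" "k_opp \<in> {1..4}" "k_prev \<in> {1..4}"
    using assms(3) unfolding k_next_def k_opp_def k_prev_def in_1_4_iff by (elim disjE; simp)+
  then have "{(l, k), (l, k_next)} \<in> links (Q4 V E)" "{(l, k), (l, k_prev)} \<in> links (Q4 V E)"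
    "{(l, k_next), (l, k_opp)} \<in> links (Q4 V E)" "{(l, k_prev), (l, k_opp)} \<in> links (Q4 V E)"
    using assms unfolding Q4_simps Q_local_adjacent_iff by auto
  then have "fv (l, k_next) = fv (l, k) \<or> fv (l, k_prev) = fv (l, k)"
    using square_meets_fibre[OF acyclic] idx(5,6) by simp
  then show ?thesis
    using assms(1) idx unfolding fibre_def by (auto simp: add.commute)
qed

lemma fibre_parity_spreads:
  assumes "\<forall>x\<in>fibre y. even (snd x + r)" "{y, z} \<in> E"
  shows "\<forall>x\<in>fibre z. even (snd x + r)"
proof
  fix x'
  assume "x' \<in> fibre z"
  then have x': "x' \<in> verts (Q4 V E)" "{fv x', y} \<in> E"
    using assms(2) unfolding fibre_def by (auto simp: insert_commute)
  obtain x where x: "{x', x} \<in> links (Q4 V E)" "fv x = y"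
    using lift_edge[OF x'] by metis
  obtain a i b j where ai: "x = (a, i)" and bj: "x' = (b, j)"
    by force
  have "x \<in> fibre y"
    using x link_in_verts unfolding fibre_def by blast
  then have even_i: "even (i + r)" "a \<in> V" "i \<in> {1..4}"
    using assms(1) ai unfolding fibre_def by auto
  show "even (snd x' + r)"
  proof (cases "sdeg E a = 1")
    case True
    then obtain w where "w \<in> fibre y" "odd (snd w + i)"
      using leaf_fibre_other_parity[of a i] even_i x(2) ai by blast
    then show ?thesis
      using assms(1) even_i(1) by fastforce
  next
    case False
    have "{(a, i), (b, j)} \<in> Q_links V E"
      using x(1) ai bj by (simp add: insert_commute)
    then have "even (i + j)"
      using Q_parity_change(2) False by blast
    then show ?thesis
      using even_i(1) bj by simp
  qed
qed

lemma fibre_meets_both_parities: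
  assumes "y \<in> V"
  shows "\<exists>x\<in>fibre y. odd (snd x + r)"
proof (rule ccontr)
  assume "\<not> ?thesis"
  then have "\<forall>x\<in>fibre y. even (snd x + r)"
    by simp
  then have uniform: "\<forall>x\<in>fibre z. even (snd x + r)" if "z \<in> V" for z
    using connected_sg_induct[OF connected assms that, where P = "\<lambda>z. \<forall>x\<in>fibre z. even (snd x + r)"]
      fibre_parity_spreads by blast
  define j :: nat where "j = (if odd r then 2 else 1)"
  have "(y, j) \<in> verts (Q4 V E)"
    using assms unfolding j_def by simp
  then have "(y, j) \<in> fibre (fv (y, j))" "fv (y, j) \<in> V"
    unfolding fibre_def using fv_in_V by simp_all
  then have "even (j + r)"
    using uniform by fastforce
  then show False
    unfolding j_def by (simp split: if_splits)
qed

lemma fibre_over_leaf_is_square: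
  assumes "x \<in> verts (Q4 V E)" "sdeg E (fv x) \<le> 1"
  obtains y1 y2 t where "fibre (fv x) = {x, y1, y2, t}" "y1 \<noteq> y2"
    "{x, y1} \<in> links (Q4 V E)" "{x, y2} \<in> links (Q4 V E)"
    "{y1, t} \<in> links (Q4 V E)" "{y2, t} \<in> links (Q4 V E)"
proof -
  let ?F = "fibre (fv x)"
  obtain y1 y2 where y: "y1 \<noteq> y2" "{x, y1} \<in> links (Q4 V E)" "{x, y2} \<in> links (Q4 V E)"
    "fv y1 = fv x" "fv y2 = fv x"
    using fibre_neighbours[OF assms] by blast
  have in_F: "x \<in> ?F" "y1 \<in> ?F" "y2 \<in> ?F"
    using assms(1) y link_in_verts unfolding fibre_def by auto
  have x_neq: "x \<noteq> y1" "x \<noteq> y2"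
    using y(2,3) Q_adjacent_neq by simp_all
  have card_F: "card ?F = 4"
    using card_fibre fv_in_V[OF assms(1)] by simp
  moreover have "card {x, y1, y2} = 3"
    using x_neq y(1) by simp
  ultimately have "?F \<noteq> {x, y1, y2}"
    by auto
  then obtain t where t: "t \<in> ?F" "t \<notin> {x, y1, y2}"
    using in_F by blast
  have F: "?F = {x, y1, y2, t}"
  proof (rule card_subset_eq[OF finite_fibre, symmetric])
    show "{x, y1, y2, t} \<subseteq> ?F"
      using in_F t(1) by simp
    show "card {x, y1, y2, t} = card ?F"
      using card_F t(2) x_neq y(1) by auto
  qed
  have not_adjacent: "{y1, y2} \<notin> links (Q4 V E)"
    using Q_no_triangle[OF acyclic] y(2,3) by (metis Q4_simps(2))
  moreover have "fibre (fv x) = {x, y2, y1, t}" "{y2, y1} \<notin> links (Q4 V E)"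
    using F not_adjacent by (simp_all add: insert_commute)
  ultimately show thesis
    using that[OF F y(1-3)] fibre_over_leaf_neighbour assms(2) by blast
qed

lemma sdeg_image_ge_2:
  assumes "(u, i) \<in> verts (Q4 V E)" "sdeg E u \<ge> 2"
  shows "sdeg E (fv (u, i)) \<ge> 2"
proof (rule ccontr)
  assume "\<not> ?thesis"
  then have "sdeg E (fv (u, i)) \<le> 1"
    by simp
  then obtain y1 y2 t where F: "fibre (fv (u, i)) = {(u, i), y1, y2, t}" and "y1 \<noteq> y2"
    and links: "{(u, i), y1} \<in> links (Q4 V E)" "{(u, i), y2} \<in> links (Q4 V E)"
      "{y1, t} \<in> links (Q4 V E)" "{y2, t} \<in> links (Q4 V E)"
    by (rule fibre_over_leaf_is_square[OF assms(1)])
  obtain a j b k c m where y: "y1 = (a, j)" "y2 = (b, k)" "t = (c, m)"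
    by (metis prod.exhaust)
  have "sdeg E u \<noteq> 1"
    using assms(2) by simp
  then have "even (i + j)" "even (i + k)"
    using Q_parity_change(2) links(1,2) y unfolding Q4_simps by blast+
  show False
  proof (cases "even (i + m)")
    case True
    then have "\<forall>x\<in>fibre (fv (u, i)). even (snd x + i)"
      using F y \<open>even (i + j)\<close> \<open>even (i + k)\<close> by (auto simp: add.commute)
    moreover obtain x where "x \<in> fibre (fv (u, i))" "odd (snd x + i)"
      using fibre_meets_both_parities[OF fv_in_V[OF assms(1)]] by blast
    ultimately show False
      by blast
  next
    case False
    then have "odd (j + m)" "odd (k + m)"
      using \<open>even (i + j)\<close> \<open>even (i + k)\<close> by simp_all
    then have "a = c" "b = c"
      using Q_parity_change(1) links(3,4) y unfolding Q4_simps by blast+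
    then have "j = k"
      using Q_neighbours_over_same_vertex[of u i c j k] links(1,2) y \<open>sdeg E u \<noteq> 1\<close> unfolding Q4_simps by simp
    then show False
      using \<open>y1 \<noteq> y2\<close> y \<open>a = c\<close> \<open>b = c\<close> by simp
  qed
qed

end

theorem lemma18:
  fixes V :: "'a set" and E :: "'a set set"
  assumes "is_tree V E"
    and "card V \<ge> 2"
    and "\<forall>u\<in>V. sdeg E u \<le> 3"
  shows "covers (Q4 V E) (T3 V E) \<and>
    (\<forall>fv fl. covering_projection (Q4 V E) (T3 V E) fv fl \<longrightarrow>
       (\<forall>u\<in>V. card {x\<in>verts (Q4 V E). fv x = u} = 4) \<and>
       (\<forall>u i. (u, i) \<in> verts (Q4 V E) \<and> relevant V E u \<longrightarrow> semi_simple (T3 V E) (fv (u, i))))"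
proof -
  interpret sgraph V E
    using assms(1) by unfold_locales (simp add: is_tree_def)
  have tree: "connected_sg V E" "acyclic_sg V E"
    using assms(1) by (simp_all add: is_tree_def)
  have "covering_projection (Q4 V E) (T3 V E) fst Q_proj_link"
    using covering_projection_Q4_T3 sdeg_pos[OF tree(1) assms(2)] by blast
  moreover have "(\<forall>u\<in>V. card {x\<in>verts (Q4 V E). fv x = u} = 4) \<and>
      (\<forall>u i. (u, i) \<in> verts (Q4 V E) \<and> relevant V E u \<longrightarrow> semi_simple (T3 V E) (fv (u, i)))"
    if "covering_projection (Q4 V E) (T3 V E) fv fl" for fv fl
  proof -
    interpret Q_tree_cover V E fv fl
      using tree assms(2) that by unfold_locales
    show ?thesis
      using card_fibre sdeg_image_ge_2 semi_simple_T3 unfolding fibre_def relevant_def by auto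
  qed
  ultimately show ?thesis
    unfolding covers_def by blast
qed

end
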